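(* Let $\{\alpha_t\}_{t\in\mathbb Z_{\ge0}}$ be a sequence of continuous, weakly monotonically increasing functions $\alpha_t\colon\mathbb R_{\ge0}\to\mathbb R_{\ge0}$ with $\alpha_t^{-1}(0)=\{0\}$ for all $t$. Then there is a non-negative $\alpha\in C^\infty(\mathbb R)$ with $\alpha^{-1}(0)=\mathbb R_{\le0}$ such that for all $t,k\in\mathbb Z_{\ge0}$, $\lim_{x\to0,\,x>0}\frac{\alpha(x)}{(\alpha_t(x))^k}=0$. *)

theory Defs
  imports "HOL-Analysis.Analysis"
begin

definition smooth_real :: "(real \<Rightarrow> real) \<Rightarrow> bool" where
  "smooth_real f \<longleftrightarrow> (\<exists>D :: nat \<Rightarrow> real \<Rightarrow> real. D 0 = f \<and>
     (\<forall>n x. (D n has_real_derivative D (Suc n) x) (at x)))"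

end

theory Submission imports Defs "HOL-Computational_Algebra.Polynomial" begin

text \<open>Let \<open>\<psi>(x) = exp(-1/x)\<close> for \<open>x > 0\<close> and \<open>\<psi>(x) = 0\<close> otherwise; it is smooth, and so is
  \<open>\<alpha>(x) = \<Sum>\<^sub>n c\<^sub>n \<psi>(x - 1/(n+1))\<close> for summable \<open>c\<^sub>n \<ge> 0\<close>, because every derivative of \<open>\<psi>\<close> is bounded
  on compact sets.  The \<open>n\<close>-th bump is only switched on at \<open>1/(n+1)\<close>, so choosing \<open>c\<^sub>n\<close> below
  \<open>\<phi>\<^sub>i(1/(n+1)) / ((n+1) 2\<^sup>n)\<close> for every \<open>i \<le> n\<close> gives \<open>\<alpha>(x) \<le> 2 x \<phi>\<^sub>i(x)\<close> near \<open>0\<close>, by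
  monotonicity of \<open>\<phi>\<^sub>i\<close>.  Applied to the countable family \<open>\<phi> = \<alpha>\<^sub>t\<^sup>k\<close> this proves the theorem.\<close>

lemma poly_times_exp_neg_tendsto_0: "((\<lambda>y. poly q y * exp (- y)) \<longlongrightarrow> (0::real)) at_top"
proof -
  have "((\<lambda>y. \<Sum>i\<le>degree q. coeff q i * (y ^ i / exp y)) \<longlongrightarrow> (\<Sum>i\<le>degree q. coeff q i * 0)) at_top"
    by (intro tendsto_sum tendsto_mult tendsto_const tendsto_power_div_exp_0)
  moreover have "(\<lambda>y. \<Sum>i\<le>degree q. coeff q i * (y ^ i / exp y)) = (\<lambda>y. poly q y * exp (- y))"
    by (auto simp: poly_altdef sum_distrib_right exp_minus field_simps sum_divide_distrib)
  ultimately show ?thesis by simp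
qed

lemma poly_inverse_times_exp_tendsto_0:
  "((\<lambda>h. poly q (1/h) * exp (- (1/h))) \<longlongrightarrow> (0::real)) (at_right 0)"
  using filterlim_compose[OF poly_times_exp_neg_tendsto_0 filterlim_inverse_at_top_right]
  by (simp add: inverse_eq_divide)

text \<open>The recursion for \<open>flat_poly\<close> comes from
  \<open>d/dx (p(1/x) exp(-1/x)) = x\<^sup>-\<^sup>2 (p - p')(1/x) exp(-1/x)\<close>.\<close>

fun flat_poly :: "nat \<Rightarrow> real poly" where
  "flat_poly 0 = 1"
| "flat_poly (Suc j) = [:0, 0, 1:] * (flat_poly j - pderiv (flat_poly j))"

definition flat_deriv :: "nat \<Rightarrow> real \<Rightarrow> real" where
  "flat_deriv j x = (if x > 0 then poly (flat_poly j) (1/x) * exp (- (1/x)) else 0)"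

lemma flat_deriv_0: "flat_deriv 0 x = (if x > 0 then exp (- (1/x)) else 0)"
  by (simp add: flat_deriv_def)

lemma flat_deriv_has_derivative_pos:
  assumes "x > 0"
  shows "(flat_deriv j has_real_derivative flat_deriv (Suc j) x) (at x)"
proof -
  let ?p = "flat_poly j"
  have "((\<lambda>y. poly ?p (1/y) * exp (- (1/y))) has_real_derivative
      poly (pderiv ?p) (1/x) * (- (1/x^2)) * exp (- (1/x)) + poly ?p (1/x) * (exp (- (1/x)) * (1/x^2))) (at x)"
    using assms by (auto intro!: derivative_eq_intros simp: power2_eq_square)
  also have "poly (pderiv ?p) (1/x) * (- (1/x^2)) * exp (- (1/x)) + poly ?p (1/x) * (exp (- (1/x)) * (1/x^2))
      = flat_deriv (Suc j) x"
    using assms by (simp add: flat_deriv_def algebra_simps power2_eq_square)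
  finally show ?thesis
    by (rule has_field_derivative_transform_within_open[where S = "{0<..}"])
       (use assms in \<open>auto simp: flat_deriv_def\<close>)
qed

lemma flat_deriv_has_derivative_0: "(flat_deriv j has_real_derivative flat_deriv (Suc j) 0) (at 0)"
proof -
  have "((\<lambda>h. poly (pCons 0 (flat_poly j)) (1/h) * exp (- (1/h))) \<longlongrightarrow> 0) (at_right 0)"
    by (rule poly_inverse_times_exp_tendsto_0)
  moreover have "eventually (\<lambda>h. poly (pCons 0 (flat_poly j)) (1/h) * exp (- (1/h))
      = (flat_deriv j h - flat_deriv j 0) / (h - 0)) (at_right 0)"
    unfolding eventually_at_right_field by (intro exI[of _ 1]) (auto simp: flat_deriv_def)
  ultimately have right: "((\<lambda>h. (flat_deriv j h - flat_deriv j 0) / (h - 0)) \<longlongrightarrow> 0) (at_right 0)"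
    by (rule Lim_transform_eventually)
  have "eventually (\<lambda>h. 0 = (flat_deriv j h - flat_deriv j 0) / (h - 0)) (at_left 0)"
    unfolding eventually_at_left_field by (intro exI[of _ "-1"]) (auto simp: flat_deriv_def)
  then have left: "((\<lambda>h. (flat_deriv j h - flat_deriv j 0) / (h - 0)) \<longlongrightarrow> 0) (at_left 0)"
    by (rule Lim_transform_eventually[OF tendsto_const])
  show ?thesis
    using filterlim_split_at[OF left right] by (simp add: has_field_derivative_iff flat_deriv_def)
qed

lemma flat_deriv_has_derivative: "(flat_deriv j has_real_derivative flat_deriv (Suc j) x) (at x)"
proof -
  consider "x > 0" | "x < 0" | "x = 0" by linarith
  then show ?thesis
  proof cases
    case 2
    have "((\<lambda>y. 0) has_real_derivative 0) (at x)" by simp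
    from has_field_derivative_transform_within_open[OF this, where S = "{..<0}" and g = "flat_deriv j"] 2
    show ?thesis by (auto simp: flat_deriv_def)
  qed (use flat_deriv_has_derivative_pos flat_deriv_has_derivative_0 in auto)
qed

lemma flat_deriv_bounded: "\<exists>B. \<forall>z\<in>{l..u}. \<bar>flat_deriv j z\<bar> \<le> B"
proof -
  have "continuous_on {l..u} (flat_deriv j)"
    by (intro continuous_at_imp_continuous_on ballI DERIV_isCont[OF flat_deriv_has_derivative])
  then have "bounded (flat_deriv j ` {l..u})"
    by (intro compact_imp_bounded compact_continuous_image) auto
  then show ?thesis by (auto simp: bounded_iff)
qed

lemma flat_deriv_shifted_has_derivative:
  "((\<lambda>y. c * flat_deriv j (y - a)) has_real_derivative c * flat_deriv (Suc j) (x - a)) (at x)"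
proof -
  have "((\<lambda>y. flat_deriv j (y - a)) has_real_derivative flat_deriv (Suc j) (x - a) * 1) (at x)"
    by (rule DERIV_chain2[OF flat_deriv_has_derivative]) (auto intro!: derivative_eq_intros)
  then show ?thesis by (auto intro: DERIV_cmult)
qed

lemma shifted_flat_series_has_derivative:
  fixes c a :: "nat \<Rightarrow> real"
  assumes c: "summable c" "\<And>n. c n \<ge> 0" and a: "\<And>n. a n \<in> {l..u}"
  shows "((\<lambda>x. \<Sum>n. c n * flat_deriv j (x - a n)) has_real_derivative
           (\<Sum>n. c n * flat_deriv (Suc j) (x - a n))) (at x)"
proof -
  define S where "S = {x-1<..<x+1}"
  define K where "K = {x-1-u..x+1-l}"
  obtain B where B: "\<forall>z\<in>K. \<bar>flat_deriv j z\<bar> \<le> B"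
    unfolding K_def using flat_deriv_bounded by blast
  obtain B' where B': "\<forall>z\<in>K. \<bar>flat_deriv (Suc j) z\<bar> \<le> B'"
    unfolding K_def using flat_deriv_bounded by blast
  have in_K: "y - a n \<in> K" if "y \<in> S" for y n
    using a[of n] that by (auto simp: S_def K_def)
  have dominated: "norm (c n * flat_deriv i (y - a n)) \<le> c n * C"
    if "\<forall>z\<in>K. \<bar>flat_deriv i z\<bar> \<le> C" "y \<in> S" for i C n y
    using that in_K c(2)[of n] by (auto simp: abs_mult intro: mult_left_mono)
  show ?thesis
  proof (rule has_field_derivative_series'(2)[where S = S and x0 = x])
    show "((\<lambda>y. c n * flat_deriv j (y - a n)) has_real_derivative c n * flat_deriv (Suc j) (y - a n))
        (at y within S)" for n y
      by (rule has_field_derivative_at_within[OF flat_deriv_shifted_has_derivative])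
    show "uniformly_convergent_on S (\<lambda>n y. \<Sum>i<n. c i * flat_deriv (Suc j) (y - a i))"
    proof (rule Weierstrass_m_test'[where M = "\<lambda>n. c n * B'"])
      show "norm (c n * flat_deriv (Suc j) (y - a n)) \<le> c n * B'" if "y \<in> S" for n y
        by (rule dominated[OF B' that])
    qed (rule summable_mult2[OF c(1)])
    show "summable (\<lambda>n. c n * flat_deriv j (x - a n))"
    proof (rule summable_comparison_test[where g = "\<lambda>n. c n * B"])
      show "\<exists>N. \<forall>n\<ge>N. norm (c n * flat_deriv j (x - a n)) \<le> c n * B"
        using dominated[OF B, of x] by (auto simp: S_def)
    qed (rule summable_mult2[OF c(1)])
  qed (auto simp: S_def)
qed

lemma smooth_real_shifted_flat_series:
  fixes c a :: "nat \<Rightarrow> real"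
  assumes "summable c" "\<And>n. c n \<ge> 0" and "\<And>n. a n \<in> {l..u}"
  shows "smooth_real (\<lambda>x. \<Sum>n. c n * flat_deriv 0 (x - a n))"
  unfolding smooth_real_def
  by (rule exI[of _ "\<lambda>j x. \<Sum>n. c n * flat_deriv j (x - a n)"])
     (auto intro: shifted_flat_series_has_derivative[OF assms])

lemma summable_shifted_flat_series:
  assumes "summable c" "\<And>n. c n \<ge> 0"
  shows "summable (\<lambda>n. c n * flat_deriv 0 (x - a n))"
  by (rule summable_comparison_test[OF _ assms(1)])
     (use assms(2) in \<open>auto intro!: mult_left_le exI[of _ 0] simp: flat_deriv_0\<close>)

lemma shifted_flat_series_le:
  fixes c a :: "nat \<Rightarrow> real"
  assumes c: "summable c" "\<And>n. c n \<ge> 0"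
    and tail: "\<And>m. m \<ge> M \<Longrightarrow> c m \<le> B * (1/2) ^ m"
    and head: "\<And>m. m < M \<Longrightarrow> x \<le> a m"
    and "B \<ge> 0"
  shows "(\<Sum>n. c n * flat_deriv 0 (x - a n)) \<le> 2 * B"
proof -
  have "c m * flat_deriv 0 (x - a m) \<le> B * (1/2) ^ m" for m
  proof (cases "m < M")
    case True
    then show ?thesis using head[OF True] \<open>B \<ge> 0\<close> by (simp add: flat_deriv_0)
  next
    case False
    have "c m * flat_deriv 0 (x - a m) \<le> c m"
      using c(2)[of m] by (intro mult_left_le) (simp_all add: flat_deriv_0)
    with tail[of m] False show ?thesis by linarith
  qed
  then have "(\<Sum>n. c n * flat_deriv 0 (x - a n)) \<le> (\<Sum>m. B * (1/2) ^ m)"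
    by (rule suminf_le[OF _ summable_shifted_flat_series[OF c] summable_mult[OF summable_geometric]]) simp
  also have "\<dots> = 2 * B" by (simp add: suminf_mult suminf_geometric)
  finally show ?thesis .
qed

locale pos_mono_family =
  fixes \<phi> :: "nat \<Rightarrow> real \<Rightarrow> real"
  assumes mono: "mono_on {0<..} (\<phi> i)"
    and pos: "x > 0 \<Longrightarrow> \<phi> i x > 0"
begin

definition flat_weight :: "nat \<Rightarrow> real" where
  "flat_weight n = Min ((\<lambda>i. \<phi> i (1 / (real n + 1))) ` {..n}) / ((real n + 1) * 2 ^ n)"

definition flat_below :: "real \<Rightarrow> real" where
  "flat_below x = (\<Sum>n. flat_weight n * flat_deriv 0 (x - 1 / (real n + 1)))"

lemma flat_weight_pos: "flat_weight n > 0"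
  unfolding flat_weight_def by (auto intro!: divide_pos_pos simp: Min_gr_iff pos)

lemma flat_weight_le:
  assumes "i \<le> M" "M \<le> m"
  shows "flat_weight m \<le> \<phi> i (1 / (real M + 1)) / (real M + 1) * (1/2) ^ m"
proof -
  have "Min ((\<lambda>i. \<phi> i (1 / (real m + 1))) ` {..m}) \<le> \<phi> i (1 / (real m + 1))"
    using assms by (intro Min_le) auto
  also have "\<dots> \<le> \<phi> i (1 / (real M + 1))"
    using assms by (intro mono_onD[OF mono]) (auto simp: frac_le)
  finally have "flat_weight m \<le> \<phi> i (1 / (real M + 1)) / ((real m + 1) * 2 ^ m)"
    unfolding flat_weight_def by (simp add: divide_right_mono)
  also have "\<dots> \<le> \<phi> i (1 / (real M + 1)) / ((real M + 1) * 2 ^ m)"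
    using assms pos[of "1 / (real M + 1)" i] by (intro divide_left_mono) auto
  finally show ?thesis by (simp add: power_one_over)
qed

lemma summable_flat_weight: "summable flat_weight"
proof (rule summable_comparison_test[OF _ summable_mult[OF summable_geometric[of "1/2"]]])
  show "\<exists>N. \<forall>m\<ge>N. norm (flat_weight m) \<le> \<phi> 0 1 * (1/2) ^ m"
    using flat_weight_le[of 0 0] flat_weight_pos by (auto simp: less_imp_le)
qed simp

lemma smooth_real_flat_below: "smooth_real flat_below"
  unfolding flat_below_def[abs_def]
  by (rule smooth_real_shifted_flat_series[where l = 0 and u = 1, OF summable_flat_weight])
     (auto simp: less_imp_le flat_weight_pos)

lemma summable_flat_below_terms: "summable (\<lambda>n. flat_weight n * flat_deriv 0 (x - 1 / (real n + 1)))"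
  by (rule summable_shifted_flat_series[OF summable_flat_weight]) (simp add: less_imp_le flat_weight_pos)

lemma flat_below_terms_nonneg: "flat_weight n * flat_deriv 0 (x - 1 / (real n + 1)) \<ge> 0"
  by (simp add: less_imp_le flat_weight_pos flat_deriv_0)

lemma flat_below_nonneg: "flat_below x \<ge> 0"
  unfolding flat_below_def by (intro suminf_nonneg summable_flat_below_terms flat_below_terms_nonneg)

lemma flat_below_eq_0_iff: "flat_below x = 0 \<longleftrightarrow> x \<le> 0"
proof
  assume "x \<le> 0"
  have "flat_deriv 0 (x - 1 / (real n + 1)) = 0" for n
  proof -
    have "0 < 1 / (real n + 1)" by simp
    with \<open>x \<le> 0\<close> have "x - 1 / (real n + 1) \<le> 0" by linarith
    then show ?thesis by (simp add: flat_deriv_0)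
  qed
  then show "flat_below x = 0" by (simp add: flat_below_def)
next
  assume zero: "flat_below x = 0"
  show "x \<le> 0"
  proof (rule ccontr)
    assume "\<not> x \<le> 0"
    then obtain n where "1 / (real n + 1) < x"
      by (metis add.commute linorder_not_le nat_approx_posE of_nat_Suc)
    then have "flat_weight n * flat_deriv 0 (x - 1 / (real n + 1)) > 0"
      using flat_weight_pos by (simp add: flat_deriv_0)
    then have "flat_below x > 0" unfolding flat_below_def
      by (rule suminf_pos2[OF summable_flat_below_terms flat_below_terms_nonneg])
    with zero show False by simp
  qed
qed

lemma flat_below_le:
  assumes x: "0 < x" "x \<le> 1 / (real i + 1)"
  shows "flat_below x \<le> 2 * x * \<phi> i x"
proof -
  define M where "M = nat \<lfloor>1 / x\<rfloor>"
  have M: "real M \<le> 1 / x" "1 / x < real M + 1"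
    using x(1) floor_correct[of "1/x"] by (auto simp: M_def)
  have "real i + 1 \<le> 1 / x" using x by (simp add: field_simps)
  then have "i \<le> M" using M by linarith
  have knot_M: "1 / (real M + 1) < x" using M x by (simp add: field_simps)
  define B where "B = \<phi> i (1 / (real M + 1)) / (real M + 1)"
  have "flat_below x \<le> 2 * B"
    unfolding flat_below_def
  proof (rule shifted_flat_series_le[OF summable_flat_weight])
    show "flat_weight m \<le> B * (1/2) ^ m" if "M \<le> m" for m
      using flat_weight_le[OF \<open>i \<le> M\<close> that] by (simp add: B_def)
    show "x \<le> 1 / (real m + 1)" if "m < M" for m
    proof -
      have "x * (real m + 1) \<le> x * real M"
        using that x by (intro mult_left_mono) auto
      with M x show ?thesis by (simp add: field_simps)
    qed
    show "B \<ge> 0" using pos[of "1 / (real M + 1)" i] by (simp add: B_def)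
  qed (auto simp: less_imp_le flat_weight_pos)
  also have "B = 1 / (real M + 1) * \<phi> i (1 / (real M + 1))"
    by (simp add: B_def)
  also have "\<dots> \<le> x * \<phi> i x"
    using knot_M x pos[of "1 / (real M + 1)" i]
    by (intro mult_mono mono_onD[OF mono]) auto
  finally show ?thesis by simp
qed

lemma tendsto_flat_below_divide: "((\<lambda>x. flat_below x / \<phi> i x) \<longlongrightarrow> 0) (at_right 0)"
proof (rule tendsto_sandwich[where f = "\<lambda>_. 0" and h = "\<lambda>x. 2 * x"])
  have "eventually (\<lambda>x. 0 < x \<and> x \<le> 1 / (real i + 1)) (at_right 0)"
    unfolding eventually_at_right_field by (intro exI[of _ "1 / (real i + 1)"]) auto
  then show "eventually (\<lambda>x. flat_below x / \<phi> i x \<le> 2 * x) (at_right 0)"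
    by eventually_elim (use flat_below_le pos in \<open>auto simp: pos_divide_le_eq\<close>)
  show "eventually (\<lambda>x. 0 \<le> flat_below x / \<phi> i x) (at_right 0)"
    unfolding eventually_at_right_field
    by (intro exI[of _ 1]) (use flat_below_nonneg pos in \<open>auto simp: less_imp_le\<close>)
  show "((\<lambda>x. 2 * x) \<longlongrightarrow> 0) (at_right (0::real))"
    by (auto intro!: tendsto_eq_intros)
qed simp

end

lemma pos_mono_family_powers:
  fixes f :: "nat \<Rightarrow> real \<Rightarrow> real"
  assumes mono: "\<And>t. mono_on {0<..} (f t)" and pos: "\<And>t x. x > 0 \<Longrightarrow> f t x > 0"
  shows "pos_mono_family (\<lambda>i x. f (fst (prod_decode i)) x ^ snd (prod_decode i))"
proof
  show "mono_on {0<..} (\<lambda>x. f (fst (prod_decode i)) x ^ snd (prod_decode i))" for i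
  proof (rule mono_onI)
    fix x y :: real assume "x \<in> {0<..}" "y \<in> {0<..}" "x \<le> y"
    then show "f (fst (prod_decode i)) x ^ snd (prod_decode i) \<le> f (fst (prod_decode i)) y ^ snd (prod_decode i)"
      using pos mono_onD[OF mono] by (intro power_mono) (auto simp: less_imp_le)
  qed
qed (simp add: pos)

lemma pos_if_zero_set_eq_0:
  fixes f :: "real \<Rightarrow> real"
  assumes "\<And>x. x \<ge> 0 \<Longrightarrow> f x \<ge> 0" "{x. x \<ge> 0 \<and> f x = 0} = {0}" "x > 0"
  shows "f x > 0"
  using assms by (metis (mono_tags, lifting) less_eq_real_def mem_Collect_eq singletonD)

theorem propositionA1:
  fixes \<alpha>s :: "nat \<Rightarrow> real \<Rightarrow> real"
  assumes cont: "\<And>t. continuous_on {0..} (\<alpha>s t)"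
    and mono: "\<And>t. mono_on {0..} (\<alpha>s t)"
    and nonneg: "\<And>t x. x \<ge> 0 \<Longrightarrow> \<alpha>s t x \<ge> 0"
    and zero: "\<And>t. {x. x \<ge> 0 \<and> \<alpha>s t x = 0} = {0}"
  shows "\<exists>\<alpha> :: real \<Rightarrow> real. smooth_real \<alpha> \<and> (\<forall>x. \<alpha> x \<ge> 0) \<and>
           {x. \<alpha> x = 0} = {..0} \<and>
           (\<forall>t k::nat. ((\<lambda>x. \<alpha> x / (\<alpha>s t x) ^ k) \<longlongrightarrow> 0) (at_right 0))"
proof -
  have pos: "\<alpha>s t x > 0" if "x > 0" for t x
    using pos_if_zero_set_eq_0[OF nonneg zero that] .
  interpret pos_mono_family "\<lambda>i x. \<alpha>s (fst (prod_decode i)) x ^ snd (prod_decode i)"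
    by (rule pos_mono_family_powers[OF mono_on_subset[OF mono] pos]) auto
  have "((\<lambda>x. flat_below x / \<alpha>s t x ^ k) \<longlongrightarrow> 0) (at_right 0)" for t k
    using tendsto_flat_below_divide[of "prod_encode (t, k)"] by simp
  then show ?thesis
    using smooth_real_flat_below flat_below_nonneg flat_below_eq_0_iff by blast
qed

end
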